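(* Let $X$ be a non-degenerate real-valued random variable with density $f_X$, CDF $F_X$, survival function $S_X=1-F_X$ and finite second moment. Let $h_X(x)=f_X(x)/S_X(x)$ (hazard rate) and $r_X(x)=f_X(x)/F_X(x)$ (reverse hazard rate). If $h_X$ is decreasing or $r_X$ is increasing, then \[ \mathrm{SD}[X]\ge \mathrm{GMD}[X], \] where $\mathrm{SD}[X]=\sqrt{\mathbb{E}[(X-\mathbb{E}X)^2]}=\sqrt{\tfrac12\mathbb{E}[(X-X')^2]}$ and $\mathrm{GMD}[X]=\mathbb{E}|X-X'|$, with $X'$ an independent copy of $X$.
   Context: "Increasing" and "decreasing" are meant in the non-strict sense, and monotonicity is required on the support of the function (almost surely). *)

theory Defs
  imports "HOL-Probability.Probability"
begin

definition cdf_of :: "'a measure \<Rightarrow> ('a \<Rightarrow> real) \<Rightarrow> real \<Rightarrow> real" where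
  "cdf_of M X x = measure M {\<omega> \<in> space M. X \<omega> \<le> x}"

definition hazard_rate :: "'a measure \<Rightarrow> ('a \<Rightarrow> real) \<Rightarrow> (real \<Rightarrow> real) \<Rightarrow> real \<Rightarrow> real" where
  "hazard_rate M X f x = f x / (1 - cdf_of M X x)"

definition rev_hazard_rate :: "'a measure \<Rightarrow> ('a \<Rightarrow> real) \<Rightarrow> (real \<Rightarrow> real) \<Rightarrow> real \<Rightarrow> real" where
  "rev_hazard_rate M X f x = f x / cdf_of M X x"

text \<open>Support region: points where 0 < F < 1 (interior of the convex hull of the support).\<close>
definition supp_region :: "'a measure \<Rightarrow> ('a \<Rightarrow> real) \<Rightarrow> real set" where
  "supp_region M X = {x. 0 < cdf_of M X x \<and> cdf_of M X x < 1}"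

definition ae_mono_on :: "real set \<Rightarrow> (real \<Rightarrow> real) \<Rightarrow> bool" where
  "ae_mono_on A g \<longleftrightarrow> (\<exists>N \<in> null_sets lborel. \<forall>x \<in> A - N. \<forall>y \<in> A - N. x \<le> y \<longrightarrow> g x \<le> g y)"

definition ae_antimono_on :: "real set \<Rightarrow> (real \<Rightarrow> real) \<Rightarrow> bool" where
  "ae_antimono_on A g \<longleftrightarrow> (\<exists>N \<in> null_sets lborel. \<forall>x \<in> A - N. \<forall>y \<in> A - N. x \<le> y \<longrightarrow> g y \<le> g x)"

end

theory Submission
  imports Defs
begin

(* Write S x = P(X > x) and use the stop-loss transforms pi x = E (X - x)^+ and
   pi2 x = E ((X - x)^+)^2 / 2, so that pi is the integral of S over [x, oo) and pi2 the
   integral of pi.  By symmetry E|X - X'| = 2 E pi(X) and Var X = 2 E pi2(X).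
   A decreasing hazard rate f / S makes the mean residual life pi / S increasing, and
   integrating this over [x, oo) gives pi x ^ 2 <= S x * pi2 x.  Hence 2 c pi <= c^2 S + pi2
   for every c; taking expectations with E S(X) <= 1/2 and choosing c = GMD yields
   GMD^2 <= Var X.  An increasing reverse hazard rate of X is a decreasing hazard rate of -X. *)

lemma two_mult_le_of_sq_le:
  fixes a s p c :: real
  assumes "a * a \<le> s * p" "0 \<le> s" "0 \<le> p"
  shows "2 * c * a \<le> c * c * s + p"
proof (cases "s = 0")
  case True
  with assms have "a = 0"
    by (metis mult_eq_0_iff mult_zero_left order_antisym_conv zero_le_square)
  with True assms show ?thesis by simp
next
  case False
  have "s * (2 * c * a) \<le> (c * s) ^ 2 + a * a"
    using zero_le_power2[of "c * s - a"] by (simp add: power2_eq_square algebra_simps)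
  also have "\<dots> \<le> s * (c * c * s + p)"
    using assms(1) by (simp add: power2_eq_square algebra_simps)
  finally show ?thesis
    using False assms(2) by (simp add: mult_le_cancel_left)
qed

lemma ennreal_two_mult_le_of_sq_le:
  fixes a s p c :: ennreal
  assumes "a * a \<le> s * p"
  shows "2 * c * a \<le> c * c * s + p"
proof -
  consider "a = 0 \<or> c = 0" | "p = \<infinity>" | "a \<noteq> 0" "c \<noteq> 0" "c = \<infinity> \<or> s = \<infinity>"
    | "c < \<infinity>" "s < \<infinity>" "p < \<infinity>"
    by (metis infinity_ennreal_def less_top)
  then show ?thesis
  proof cases
    case 1
    then show ?thesis by auto
  next
    case 2
    then show ?thesis by simp
  next
    case 3
    then have "s \<noteq> 0" using assms by (auto simp: le_zero_eq)
    with 3 have "c * c * s = \<infinity>" by (auto simp: ennreal_mult_eq_top_iff)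
    then show ?thesis by simp
  next
    case 4
    then have "s * p < \<infinity>" by (simp add: ennreal_mult_less_top)
    with assms have "a * a < \<infinity>" by (rule le_less_trans)
    then have "a < \<infinity>" by (cases "a = 0") (auto simp: ennreal_mult_less_top)
    with 4 obtain a' s' p' c' where
      reals: "a = ennreal a'" "s = ennreal s'" "p = ennreal p'" "c = ennreal c'"
      and nonneg: "0 \<le> a'" "0 \<le> s'" "0 \<le> p'" "0 \<le> c'"
      by (cases a; cases s; cases p; cases c) auto
    have "a' * a' \<le> s' * p'"
      using assms by (simp add: reals nonneg ennreal_mult'[symmetric] ennreal_le_iff)
    then have "2 * c' * a' \<le> c' * c' * s' + p'"
      using nonneg(2,3) by (rule two_mult_le_of_sq_le)
    moreover have "2 * c * a = ennreal (2 * c' * a')"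
      using nonneg by (simp add: reals ennreal_mult)
    moreover have "c * c * s + p = ennreal (c' * c' * s' + p')"
      using nonneg by (simp add: reals ennreal_mult ennreal_plus)
    ultimately show ?thesis by (simp add: ennreal_leI)
  qed
qed

lemma AE_measure_greaterThan_pos:
  fixes M :: "real measure"
  assumes "finite_measure M" and sets: "sets M = sets borel" and atomless: "\<And>a. emeasure M {a} = 0"
  shows "AE x in M. 0 < measure M {x<..}"
proof -
  interpret finite_measure M by fact
  define B where "B = {x. measure M {x<..} = 0}"
  have B_upward: "y \<in> B" if "x \<in> B" "x \<le> y" for x y
    using that finite_measure_mono[of "{y<..}" "{x<..}"] measure_nonneg[of M "{y<..}"]
    by (auto simp: B_def sets)
  define Q where "Q = B \<inter> \<rat>"
  have "countable Q"
    unfolding Q_def by (rule countable_subset[OF _ countable_rat]) auto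
  have "{Inf B} \<in> null_sets M"
    using atomless by (simp add: null_sets_def sets)
  moreover from \<open>countable Q\<close> have "(\<Union>q\<in>Q. {q<..}) \<in> null_sets M"
    by (rule null_sets_UN') (auto simp: Q_def B_def sets emeasure_eq_measure)
  ultimately have null: "{Inf B} \<union> (\<Union>q\<in>Q. {q<..}) \<in> null_sets M"
    by (rule null_sets.Un)
  have "B \<subseteq> {Inf B} \<union> (\<Union>q\<in>Q. {q<..})"
  proof
    fix v assume "v \<in> B"
    show "v \<in> {Inf B} \<union> (\<Union>q\<in>Q. {q<..})"
    proof (cases "\<exists>w\<in>B. w < v")
      case True
      then obtain w q where "w \<in> B" "q \<in> \<rat>" "w < q" "q < v"
        using Rats_dense_in_real by blast
      then show ?thesis using B_upward by (auto simp: Q_def)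
    next
      case False
      with \<open>v \<in> B\<close> have "Inf B = v" by (intro cInf_eq_minimum) (auto simp: not_less)
      then show ?thesis by auto
    qed
  qed
  then show ?thesis
    by (intro AE_I'[OF null]) (auto simp: B_def less_le measure_nonneg)
qed

lemma AE_measure_atMost_pos:
  fixes M :: "real measure"
  assumes "finite_measure M" and sets: "sets M = sets borel" and atomless: "\<And>a. emeasure M {a} = 0"
  shows "AE x in M. 0 < measure M {..x}"
proof -
  interpret finite_measure M by fact
  note sets[measurable_cong]
  let ?R = "distr M borel uminus"
  have "AE y in ?R. 0 < measure ?R {y<..}"
  proof (rule AE_measure_greaterThan_pos)
    show "finite_measure ?R" by (rule finite_measure_distr) simp
    show "emeasure ?R {a} = 0" for a
    proof -
      have "uminus -` {a} = {-a}" by auto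
      then show ?thesis by (simp add: emeasure_distr sets atomless)
    qed
  qed simp
  then have "AE x in M. 0 < measure ?R {-x<..}"
    by (rule AE_distrD[rotated]) simp
  moreover have "measure ?R {-x<..} \<le> measure M {..x}" for x
  proof -
    have "uminus -` {-x<..} = {..<x}" by auto
    then have "measure ?R {-x<..} = measure M {..<x}"
      by (simp add: measure_distr sets)
    also have "\<dots> \<le> measure M {..x}"
      by (rule finite_measure_mono) (auto simp: sets)
    finally show ?thesis .
  qed
  ultimately show ?thesis
    by (auto elim: eventually_mono intro: less_le_trans)
qed

locale real_density_prob = prob_space \<mu> for \<mu> :: "real measure" +
  fixes f :: "real \<Rightarrow> real"
  assumes density_eq: "\<mu> = density lborel (\<lambda>x. ennreal (f x))"
    and borel_measurable_density[measurable]: "f \<in> borel_measurable borel"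
    and density_nonneg: "\<And>x. 0 \<le> f x"
begin

lemma sets_eq[measurable_cong]: "sets \<mu> = sets borel"
  by (simp add: density_eq)

lemma space_eq[simp]: "space \<mu> = UNIV"
  by (simp add: density_eq)

lemma emeasure_eq_nn_integral_density:
  "A \<in> sets borel \<Longrightarrow> emeasure \<mu> A = (\<integral>\<^sup>+x. ennreal (f x) * indicator A x \<partial>lborel)"
  by (simp add: density_eq emeasure_density)

lemma emeasure_singleton: "emeasure \<mu> {a} = 0"
  by (simp add: emeasure_eq_nn_integral_density nn_integral_null_set null_setsI)

lemma measure_atLeast_eq_greaterThan: "measure \<mu> {a..} = measure \<mu> {a<..}"
proof -
  have "{a..} = {a<..} \<union> {a}" by auto
  then show ?thesis
    using measure_Un_null_set[of "{a<..}" \<mu> "{a}"] by (simp add: null_setsI emeasure_singleton sets_eq)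
qed

sublocale lborel_prod: pair_sigma_finite lborel \<mu> ..

sublocale self_prod: pair_sigma_finite \<mu> \<mu> ..

definition surv :: "real \<Rightarrow> ennreal" where
  "surv x = emeasure \<mu> {x<..}"

definition stop_loss :: "real \<Rightarrow> ennreal" where
  "stop_loss x = (\<integral>\<^sup>+t. ennreal (max 0 (t - x)) \<partial>\<mu>)"

definition stop_loss2 :: "real \<Rightarrow> ennreal" where
  "stop_loss2 x = (\<integral>\<^sup>+t. ennreal ((max 0 (t - x))\<^sup>2 / 2) \<partial>\<mu>)"

lemma surv_eq_nn_integral: "surv x = (\<integral>\<^sup>+t. indicator {x<..} t \<partial>\<mu>)"
  by (simp add: surv_def sets_eq)

lemma surv_eq_measure: "surv x = ennreal (measure \<mu> {x<..})"
  by (simp add: surv_def emeasure_eq_measure)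

lemma borel_measurable_surv[measurable]: "surv \<in> borel_measurable borel"
  unfolding surv_eq_nn_integral[abs_def] indicator_def greaterThan_iff by measurable

lemma borel_measurable_stop_loss[measurable]: "stop_loss \<in> borel_measurable borel"
  unfolding stop_loss_def[abs_def] by measurable

lemma borel_measurable_stop_loss2[measurable]: "stop_loss2 \<in> borel_measurable borel"
  unfolding stop_loss2_def[abs_def] by measurable

lemma stop_loss_eq_nn_integral_surv:
  "stop_loss x = (\<integral>\<^sup>+u\<in>{x..}. surv u \<partial>lborel)"
proof -
  have "ennreal (max 0 (t - x)) = (\<integral>\<^sup>+u. indicator {x..} u * indicator {u<..} t \<partial>lborel)" for t
  proof -
    have "(\<lambda>u. indicator {x..} u * indicator {u<..} t :: ennreal) = indicator {x..<t}"
      by (auto simp: indicator_def fun_eq_iff)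
    then show ?thesis by (cases "x \<le> t") (auto simp: max_def)
  qed
  then have "stop_loss x = (\<integral>\<^sup>+t. \<integral>\<^sup>+u. indicator {x..} u * indicator {u<..} t \<partial>lborel \<partial>\<mu>)"
    by (simp add: stop_loss_def)
  also have "\<dots> = (\<integral>\<^sup>+u. \<integral>\<^sup>+t. indicator {x..} u * indicator {u<..} t \<partial>\<mu> \<partial>lborel)"
    by (rule lborel_prod.Fubini') (unfold indicator_def greaterThan_iff atLeast_iff, measurable)
  also have "\<dots> = (\<integral>\<^sup>+u. surv u * indicator {x..} u \<partial>lborel)"
    by (intro nn_integral_cong) (simp add: surv_eq_nn_integral nn_integral_cmult mult.commute)
  finally show ?thesis .
qed

lemma stop_loss2_eq_nn_integral_stop_loss:
  "stop_loss2 x = (\<integral>\<^sup>+u\<in>{x..}. stop_loss u \<partial>lborel)"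
proof -
  have "(\<integral>\<^sup>+u. ennreal (max 0 (t - u)) * indicator {x..} u \<partial>lborel) = ennreal ((max 0 (t - x))\<^sup>2 / 2)"
    for t
  proof (cases "x \<le> t")
    case True
    have "(\<integral>\<^sup>+u. ennreal (max 0 (t - u)) * indicator {x..} u \<partial>lborel)
        = (\<integral>\<^sup>+u. ennreal (t - u) * indicator {x..t} u \<partial>lborel)"
      by (intro nn_integral_cong) (auto simp: indicator_def max_def)
    also have "\<dots> = (t * t - t\<^sup>2 / 2) - (t * x - x\<^sup>2 / 2)"
      using True by (intro nn_integral_FTC_Icc) (auto intro!: derivative_eq_intros)
    also have "\<dots> = ennreal ((max 0 (t - x))\<^sup>2 / 2)"
      using True by (simp add: max_def power2_eq_square field_simps)
    finally show ?thesis .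
  next
    case False
    then have "(\<lambda>u. ennreal (max 0 (t - u)) * indicator {x..} u) = (\<lambda>u. 0)"
      by (auto simp: indicator_def max_def fun_eq_iff)
    with False show ?thesis by (simp add: max_def)
  qed
  then have "stop_loss2 x = (\<integral>\<^sup>+t. \<integral>\<^sup>+u. ennreal (max 0 (t - u)) * indicator {x..} u \<partial>lborel \<partial>\<mu>)"
    by (simp add: stop_loss2_def)
  also have "\<dots> = (\<integral>\<^sup>+u. \<integral>\<^sup>+t. ennreal (max 0 (t - u)) * indicator {x..} u \<partial>\<mu> \<partial>lborel)"
    by (rule lborel_prod.Fubini') (unfold indicator_def atLeast_iff, measurable)
  also have "\<dots> = (\<integral>\<^sup>+u. stop_loss u * indicator {x..} u \<partial>lborel)"
    by (intro nn_integral_cong) (simp add: stop_loss_def nn_integral_multc)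
  finally show ?thesis .
qed

lemma AE_cdf_pos: "AE x in \<mu>. 0 < measure \<mu> {..x}"
  by (rule AE_measure_atMost_pos) (simp_all add: sets_eq emeasure_singleton finite_measure_axioms)

lemma AE_lborel_if_AE:
  assumes "AE x in \<mu>. P x"
  shows "AE x in lborel. 0 < f x \<longrightarrow> P x"
proof -
  have "AE x in density lborel (\<lambda>x. ennreal (f x)). P x"
    using assms by (simp only: density_eq[symmetric])
  then show ?thesis by (simp add: AE_density)
qed

lemma AE_density_zero_if_surv_zero: "AE v in lborel. measure \<mu> {v<..} = 0 \<longrightarrow> f v = 0"
proof -
  have "AE v in \<mu>. 0 < measure \<mu> {v<..}"
    by (rule AE_measure_greaterThan_pos) (simp_all add: sets_eq emeasure_singleton finite_measure_axioms)
  from AE_lborel_if_AE[OF this] show ?thesis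
    by eventually_elim (use density_nonneg in \<open>auto simp: order_le_less\<close>)
qed

lemma stop_loss_split:
  "x \<le> u \<Longrightarrow> stop_loss x = stop_loss u + (\<integral>\<^sup>+v\<in>{x..<u}. surv v \<partial>lborel)"
proof -
  assume "x \<le> u"
  then have "surv v * indicator {x..} v = surv v * indicator {u..} v + surv v * indicator {x..<u} v" for v
    by (auto simp: indicator_def)
  then show ?thesis
    by (simp add: stop_loss_eq_nn_integral_surv nn_integral_add)
qed

lemma surv_split: "x \<le> u \<Longrightarrow> surv x = surv u + emeasure \<mu> {x<..u}"
proof -
  assume "x \<le> u"
  then have "{x<..} = {u<..} \<union> {x<..u}" by auto
  moreover have "emeasure \<mu> {u<..} + emeasure \<mu> {x<..u} = emeasure \<mu> ({u<..} \<union> {x<..u})"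
    by (rule plus_emeasure) (auto simp: sets_eq)
  ultimately show ?thesis
    unfolding surv_def by simp
qed

(* A decreasing hazard rate f / S off the null set N, cross-multiplied; as in supp_region,
   it is only required where 0 < F z and 0 < S v. *)
context
  fixes N :: "real set"
  assumes null_N: "N \<in> null_sets lborel"
    and hazard_antimono: "\<And>z v. z \<notin> N \<Longrightarrow> v \<notin> N \<Longrightarrow> z \<le> v \<Longrightarrow> 0 < measure \<mu> {..z} \<Longrightarrow>
      0 < measure \<mu> {v<..} \<Longrightarrow> f v * measure \<mu> {z<..} \<le> f z * measure \<mu> {v<..}"
begin

(* Integrate the hazard inequality f v * S z <= f z * S v over v > u. *)
lemma surv_mult_surv_le:
  assumes "z \<notin> N" "0 < measure \<mu> {..z}" "z \<le> u"
  shows "surv z * surv u \<le> ennreal (f z) * stop_loss u"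
proof -
  have "surv u = (\<integral>\<^sup>+v. ennreal (f v) * indicator {u<..} v \<partial>lborel)"
    by (simp add: surv_def emeasure_eq_nn_integral_density)
  then have "surv z * surv u = (\<integral>\<^sup>+v. surv z * (ennreal (f v) * indicator {u<..} v) \<partial>lborel)"
    by (simp add: nn_integral_cmult)
  also have "\<dots> \<le> (\<integral>\<^sup>+v. ennreal (f z) * (surv v * indicator {u..} v) \<partial>lborel)"
  proof (rule nn_integral_mono_AE)
    from AE_not_in[OF null_N] AE_density_zero_if_surv_zero
    show "AE v in lborel. surv z * (ennreal (f v) * indicator {u<..} v)
        \<le> ennreal (f z) * (surv v * indicator {u..} v)"
    proof eventually_elim
      case (elim v)
      show ?case
      proof (cases "u < v \<and> 0 < measure \<mu> {v<..}")
        case True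
        with assms elim have "f v * measure \<mu> {z<..} \<le> f z * measure \<mu> {v<..}"
          by (intro hazard_antimono) auto
        then have "ennreal (measure \<mu> {z<..}) * ennreal (f v) \<le> ennreal (f z) * ennreal (measure \<mu> {v<..})"
          by (simp add: ennreal_mult'[symmetric] density_nonneg mult.commute ennreal_leI)
        with True show ?thesis by (simp add: surv_eq_measure indicator_def)
      next
        case False
        with elim show ?thesis by (auto simp: indicator_def less_le)
      qed
    qed
  qed
  also have "\<dots> = ennreal (f z) * stop_loss u"
    by (simp add: nn_integral_cmult stop_loss_eq_nn_integral_surv)
  finally show ?thesis .
qed

lemma stop_loss_mult_surv_le:
  assumes "0 < measure \<mu> {..x}" "x \<le> u"
  shows "stop_loss x * surv u \<le> surv x * stop_loss u"
proof -
  have "(\<integral>\<^sup>+v\<in>{x..<u}. surv v \<partial>lborel) * surv u = (\<integral>\<^sup>+v. surv v * indicator {x..<u} v * surv u \<partial>lborel)"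
    by (simp add: nn_integral_multc)
  also have "\<dots> \<le> (\<integral>\<^sup>+v. ennreal (f v) * indicator {x<..u} v * stop_loss u \<partial>lborel)"
  proof (rule nn_integral_mono_AE)
    have "{x} \<in> null_sets lborel" by (simp add: null_setsI)
    from AE_not_in[OF null_N] AE_not_in[OF this]
    show "AE v in lborel. surv v * indicator {x..<u} v * surv u \<le> ennreal (f v) * indicator {x<..u} v * stop_loss u"
    proof eventually_elim
      case (elim v)
      show ?case
      proof (cases "x < v \<and> v < u")
        case True
        then have "measure \<mu> {..x} \<le> measure \<mu> {..v}"
          by (intro finite_measure_mono) (auto simp: sets_eq)
        with True assms elim show ?thesis
          using surv_mult_surv_le[of v u] by (simp add: indicator_def)
      next
        case False
        with elim show ?thesis by (auto simp: indicator_def)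
      qed
    qed
  qed
  also have "\<dots> = emeasure \<mu> {x<..u} * stop_loss u"
    by (simp add: emeasure_eq_nn_integral_density nn_integral_multc)
  finally have "(\<integral>\<^sup>+v\<in>{x..<u}. surv v \<partial>lborel) * surv u \<le> emeasure \<mu> {x<..u} * stop_loss u" .
  then have "stop_loss u * surv u + (\<integral>\<^sup>+v\<in>{x..<u}. surv v \<partial>lborel) * surv u
      \<le> stop_loss u * surv u + emeasure \<mu> {x<..u} * stop_loss u"
    by (rule add_left_mono)
  then show ?thesis
    by (simp only: stop_loss_split[OF assms(2)] surv_split[OF assms(2)] distrib_right
        mult.commute[of "surv u" "stop_loss u"])
qed

lemma stop_loss_sq_le:
  assumes "0 < measure \<mu> {..x}"
  shows "stop_loss x * stop_loss x \<le> surv x * stop_loss2 x"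
proof -
  have "stop_loss x * stop_loss x = (\<integral>\<^sup>+u. stop_loss x * (surv u * indicator {x..} u) \<partial>lborel)"
    by (simp add: nn_integral_cmult stop_loss_eq_nn_integral_surv[of x])
  also have "\<dots> \<le> (\<integral>\<^sup>+u. surv x * (stop_loss u * indicator {x..} u) \<partial>lborel)"
    using stop_loss_mult_surv_le[OF assms] by (intro nn_integral_mono) (auto simp: indicator_def)
  also have "\<dots> = surv x * stop_loss2 x"
    by (simp add: nn_integral_cmult stop_loss2_eq_nn_integral_stop_loss)
  finally show ?thesis .
qed

end

lemma AE_stop_loss_sq_le:
  assumes "ae_antimono_on (supp_region \<mu> id) (hazard_rate \<mu> id f)"
  shows "AE x in \<mu>. stop_loss x * stop_loss x \<le> surv x * stop_loss2 x"
proof -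
  have cdf: "cdf_of \<mu> id x = measure \<mu> {..x}" for x
    by (simp add: cdf_of_def atMost_def)
  have one_minus_cdf: "1 - cdf_of \<mu> id x = measure \<mu> {x<..}" for x
  proof -
    have "UNIV - {..x} = {x<..}" by auto
    then show ?thesis using prob_compl[of "{..x}"] by (simp add: cdf sets_eq)
  qed
  from assms obtain N where null_N: "N \<in> null_sets lborel" and hazard_mono:
    "\<forall>z\<in>supp_region \<mu> id - N. \<forall>v\<in>supp_region \<mu> id - N. z \<le> v \<longrightarrow> hazard_rate \<mu> id f v \<le> hazard_rate \<mu> id f z"
    unfolding ae_antimono_on_def by blast
  have hazard_antimono: "f v * measure \<mu> {z<..} \<le> f z * measure \<mu> {v<..}"
    if "z \<notin> N" "v \<notin> N" "z \<le> v" "0 < measure \<mu> {..z}" "0 < measure \<mu> {v<..}" for z v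
  proof -
    have "measure \<mu> {..z} \<le> measure \<mu> {..v}" "measure \<mu> {v<..} \<le> measure \<mu> {z<..}"
      using \<open>z \<le> v\<close> by (auto intro!: finite_measure_mono simp: sets_eq)
    with that have "z \<in> supp_region \<mu> id - N" "v \<in> supp_region \<mu> id - N"
      by (auto simp: supp_region_def cdf one_minus_cdf[symmetric])
    with hazard_mono \<open>z \<le> v\<close> have "f v / measure \<mu> {v<..} \<le> f z / measure \<mu> {z<..}"
      by (auto simp: hazard_rate_def one_minus_cdf)
    with that \<open>measure \<mu> {v<..} \<le> measure \<mu> {z<..}\<close> show ?thesis
      by (simp add: field_simps)
  qed
  from AE_cdf_pos show ?thesis
    by eventually_elim (rule stop_loss_sq_le[OF null_N hazard_antimono])
qed

lemma nn_integral_symmetrize: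
  assumes [measurable]: "h \<in> borel_measurable borel"
  shows "(\<integral>\<^sup>+x. \<integral>\<^sup>+t. h (t - x) + h (x - t) \<partial>\<mu> \<partial>\<mu>) = 2 * (\<integral>\<^sup>+x. \<integral>\<^sup>+t. h (t - x) \<partial>\<mu> \<partial>\<mu>)"
proof -
  have "(\<integral>\<^sup>+x. \<integral>\<^sup>+t. h (x - t) \<partial>\<mu> \<partial>\<mu>) = (\<integral>\<^sup>+x. \<integral>\<^sup>+t. h (t - x) \<partial>\<mu> \<partial>\<mu>)"
    by (rule self_prod.Fubini') measurable
  then show ?thesis
    by (simp add: nn_integral_add mult_2)
qed

lemma nn_integral_surv_le: "2 * (\<integral>\<^sup>+x. surv x \<partial>\<mu>) \<le> 1"
proof -
  let ?h = "\<lambda>d::real. indicator {0<..} d :: ennreal"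
  have "surv x = (\<integral>\<^sup>+t. ?h (t - x) \<partial>\<mu>)" for x
    by (simp add: surv_eq_nn_integral indicator_def)
  then have "2 * (\<integral>\<^sup>+x. surv x \<partial>\<mu>) = (\<integral>\<^sup>+x. \<integral>\<^sup>+t. ?h (t - x) + ?h (x - t) \<partial>\<mu> \<partial>\<mu>)"
    by (simp add: nn_integral_symmetrize[of ?h])
  also have "\<dots> \<le> (\<integral>\<^sup>+x. \<integral>\<^sup>+t. 1 \<partial>\<mu> \<partial>\<mu>)"
    by (intro nn_integral_mono) (auto simp: indicator_def)
  also have "\<dots> = 1"
    using emeasure_space_1 by simp
  finally show ?thesis .
qed

lemma nn_integral_abs_diff:
  "(\<integral>\<^sup>+x. \<integral>\<^sup>+t. ennreal \<bar>x - t\<bar> \<partial>\<mu> \<partial>\<mu>) = 2 * (\<integral>\<^sup>+x. stop_loss x \<partial>\<mu>)"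
proof -
  have "ennreal \<bar>x - t\<bar> = ennreal (max 0 (t - x)) + ennreal (max 0 (x - t))" for x t :: real
    by (simp add: max_def)
  then show ?thesis
    using nn_integral_symmetrize[of "\<lambda>d. ennreal (max 0 d)"] by (simp add: stop_loss_def)
qed

lemma nn_integral_sq_diff:
  "(\<integral>\<^sup>+x. \<integral>\<^sup>+t. ennreal ((x - t)\<^sup>2) \<partial>\<mu> \<partial>\<mu>) = 4 * (\<integral>\<^sup>+x. stop_loss2 x \<partial>\<mu>)"
proof -
  let ?h = "\<lambda>d::real. ennreal ((max 0 d)\<^sup>2 / 2)"
  have two_half: "2 * ennreal (y / 2) = ennreal y" for y :: real
    using ennreal_mult'[of 2 "y / 2"] by (cases "0 \<le> y") (simp_all add: ennreal_neg)
  have "ennreal ((x - t)\<^sup>2) = 2 * (?h (t - x) + ?h (x - t))" for x t :: real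
    by (cases "x \<le> t") (simp_all add: max_def power2_commute two_half)
  then have "(\<integral>\<^sup>+x. \<integral>\<^sup>+t. ennreal ((x - t)\<^sup>2) \<partial>\<mu> \<partial>\<mu>) = 2 * (\<integral>\<^sup>+x. \<integral>\<^sup>+t. ?h (t - x) + ?h (x - t) \<partial>\<mu> \<partial>\<mu>)"
    by (simp add: nn_integral_cmult del: distrib_left_numeral)
  also have "\<dots> = 4 * (\<integral>\<^sup>+x. stop_loss2 x \<partial>\<mu>)"
    by (simp add: nn_integral_symmetrize[of ?h] stop_loss2_def)
  finally show ?thesis .
qed

lemma nn_integral_stop_loss_le:
  assumes "ae_antimono_on (supp_region \<mu> id) (hazard_rate \<mu> id f)"
  shows "4 * c * (\<integral>\<^sup>+x. stop_loss x \<partial>\<mu>) \<le> c * c + 2 * (\<integral>\<^sup>+x. stop_loss2 x \<partial>\<mu>)"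
proof -
  define P where "P = (\<integral>\<^sup>+x. stop_loss x \<partial>\<mu>)"
  define Q where "Q = (\<integral>\<^sup>+x. stop_loss2 x \<partial>\<mu>)"
  define T where "T = (\<integral>\<^sup>+x. surv x \<partial>\<mu>)"
  from AE_stop_loss_sq_le[OF assms]
  have "AE x in \<mu>. 2 * c * stop_loss x \<le> c * c * surv x + stop_loss2 x"
    by eventually_elim (rule ennreal_two_mult_le_of_sq_le)
  then have "(\<integral>\<^sup>+x. 2 * c * stop_loss x \<partial>\<mu>) \<le> (\<integral>\<^sup>+x. c * c * surv x + stop_loss2 x \<partial>\<mu>)"
    by (rule nn_integral_mono_AE)
  then have amgm: "2 * c * P \<le> c * c * T + Q"
    by (simp add: P_def Q_def T_def nn_integral_add nn_integral_cmult)
  have "4 * c * P = 2 * (2 * c * P)"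
    by (simp add: mult.assoc[symmetric])
  also have "\<dots> \<le> c * c * (2 * T) + 2 * Q"
    using mult_left_mono[OF amgm, of 2] by (simp add: algebra_simps)
  also have "\<dots> \<le> c * c + 2 * Q"
    using mult_left_mono[OF nn_integral_surv_le, of "c * c"] by (simp add: T_def add_right_mono)
  finally show ?thesis
    by (simp add: P_def Q_def)
qed

theorem mean_abs_diff_sq_le_of_hazard_antimono:
  assumes "ae_antimono_on (supp_region \<mu> id) (hazard_rate \<mu> id f)"
  shows "2 * (\<integral>\<^sup>+x. \<integral>\<^sup>+t. ennreal \<bar>x - t\<bar> \<partial>\<mu> \<partial>\<mu>)\<^sup>2
    \<le> (\<integral>\<^sup>+x. \<integral>\<^sup>+t. ennreal ((x - t)\<^sup>2) \<partial>\<mu> \<partial>\<mu>)"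
proof -
  define P where "P = (\<integral>\<^sup>+x. stop_loss x \<partial>\<mu>)"
  define Q where "Q = (\<integral>\<^sup>+x. stop_loss2 x \<partial>\<mu>)"
  note bound = nn_integral_stop_loss_le[OF assms, folded P_def Q_def]
  show ?thesis
  proof (cases "Q = \<infinity>")
    case True
    then show ?thesis
      by (simp add: nn_integral_sq_diff Q_def[symmetric])
  next
    case False
    then obtain q where q: "Q = ennreal q" "0 \<le> q"
      by (cases Q) auto
    (* c = 1 shows that P is finite; c = 2 P then gives the claim. *)
    have "1 * 1 + 2 * Q < \<infinity>"
      using q by (simp add: ennreal_mult_less_top)
    with bound[of 1] have "4 * P < \<infinity>"
      by (metis le_less_trans mult_1_right)
    then obtain p where p: "P = ennreal p" "0 \<le> p"
      by (cases P) (auto simp: ennreal_mult_less_top)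
    from bound[of "ennreal (2 * p)"] have "ennreal (8 * p\<^sup>2) \<le> ennreal (4 * p\<^sup>2 + 2 * q)"
      using p q by (simp add: ennreal_mult ennreal_plus power2_eq_square algebra_simps)
    then have "8 * p\<^sup>2 \<le> 4 * p\<^sup>2 + 2 * q"
      using q by (subst (asm) ennreal_le_iff) auto
    then have "ennreal (2 * (2 * p)\<^sup>2) \<le> ennreal (4 * q)"
      by (simp add: ennreal_leI power2_eq_square algebra_simps)
    then show ?thesis
      using p q by (simp add: nn_integral_abs_diff nn_integral_sq_diff P_def[symmetric] Q_def[symmetric]
          ennreal_mult ennreal_power[symmetric])
  qed
qed

end

lemma (in prob_space) real_density_prob_distr:
  assumes "distributed M lborel X (\<lambda>x. ennreal (f x))" and "\<And>x. 0 \<le> f x"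
  shows "real_density_prob (distr M lborel X) f"
  using assms
  by (intro real_density_prob.intro real_density_prob_axioms.intro prob_space_distr)
     (auto simp: distributed_def)

lemma cdf_of_distr:
  assumes "X \<in> M \<rightarrow>\<^sub>M lborel"
  shows "cdf_of (distr M lborel X) id x = cdf_of M X x"
proof -
  have "X -` {..x} \<inter> space M = {\<omega> \<in> space M. X \<omega> \<le> x}" by auto
  then show ?thesis
    using assms by (simp add: cdf_of_def measure_distr atMost_def[symmetric])
qed

lemma (in prob_space) nn_integral_pair_distr:
  assumes [measurable]: "X \<in> M \<rightarrow>\<^sub>M lborel" "case_prod g \<in> borel_measurable (borel \<Otimes>\<^sub>M borel)"
  shows "(\<integral>\<^sup>+\<omega>. \<integral>\<^sup>+\<omega>'. g (X \<omega>) (X \<omega>') \<partial>M \<partial>M)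
    = (\<integral>\<^sup>+x. \<integral>\<^sup>+y. g x y \<partial>distr M lborel X \<partial>distr M lborel X)"
proof -
  interpret D: prob_space "distr M lborel X"
    by (rule prob_space_distr) fact
  have sets_distr[measurable_cong]: "sets (distr M lborel X) = sets borel" by simp
  have "(\<integral>\<^sup>+\<omega>'. g x (X \<omega>') \<partial>M) = (\<integral>\<^sup>+y. g x y \<partial>distr M lborel X)" for x
    by (rule nn_integral_distr[symmetric]; measurable)
  then have "(\<integral>\<^sup>+\<omega>. \<integral>\<^sup>+\<omega>'. g (X \<omega>) (X \<omega>') \<partial>M \<partial>M)
      = (\<integral>\<^sup>+\<omega>. \<integral>\<^sup>+y. g (X \<omega>) y \<partial>distr M lborel X \<partial>M)"
    by simp
  also have "\<dots> = (\<integral>\<^sup>+x. \<integral>\<^sup>+y. g x y \<partial>distr M lborel X \<partial>distr M lborel X)"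
  proof (rule nn_integral_distr[symmetric, of X M lborel "\<lambda>x. \<integral>\<^sup>+y. g x y \<partial>distr M lborel X"])
    show "(\<lambda>x. \<integral>\<^sup>+y. g x y \<partial>distr M lborel X) \<in> borel_measurable (distr M lborel X)"
      by (rule D.borel_measurable_nn_integral)
         (simp add: measurable_cong_sets[OF sets_pair_measure_cong[OF sets_distr sets_distr] refl])
  qed fact
  finally show ?thesis .
qed

lemma (in prob_space) integral_abs_diff_eq_nn_integral:
  assumes [measurable]: "X \<in> borel_measurable M" and "integrable M X"
  shows "(\<integral>\<omega>. \<integral>\<omega>'. \<bar>X \<omega> - X \<omega>'\<bar> \<partial>M \<partial>M) = enn2real (\<integral>\<^sup>+\<omega>. \<integral>\<^sup>+\<omega>'. ennreal \<bar>X \<omega> - X \<omega>'\<bar> \<partial>M \<partial>M)"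
proof -
  have "(\<integral>\<^sup>+\<omega>'. ennreal \<bar>X \<omega> - X \<omega>'\<bar> \<partial>M) = ennreal (\<integral>\<omega>'. \<bar>X \<omega> - X \<omega>'\<bar> \<partial>M)" for \<omega>
    using assms by (intro nn_integral_eq_integral) auto
  then show ?thesis
    by (simp add: integral_eq_nn_integral)
qed

lemma (in prob_space) nn_integral_sq_diff_eq_variance:
  assumes [measurable]: "X \<in> borel_measurable M" and "integrable M (\<lambda>\<omega>. (X \<omega>)\<^sup>2)"
  shows "(\<integral>\<^sup>+\<omega>. \<integral>\<^sup>+\<omega>'. ennreal ((X \<omega> - X \<omega>')\<^sup>2) \<partial>M \<partial>M) = ennreal (2 * variance X)"
proof -
  have [simp]: "integrable M X" "integrable M (\<lambda>\<omega>. (X \<omega>)\<^sup>2)"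
    using square_integrable_imp_integrable[OF assms] assms(2) by simp_all
  have var: "variance X = expectation (\<lambda>\<omega>. (X \<omega>)\<^sup>2) - (expectation X)\<^sup>2"
    by (rule variance_eq) simp_all
  have inner: "(\<integral>\<^sup>+\<omega>'. ennreal ((a - X \<omega>')\<^sup>2) \<partial>M) = ennreal ((a - expectation X)\<^sup>2 + variance X)" for a
  proof -
    have "integrable M (\<lambda>\<omega>'. (a - X \<omega>')\<^sup>2)"
      by (simp add: power2_diff)
    then have "(\<integral>\<^sup>+\<omega>'. ennreal ((a - X \<omega>')\<^sup>2) \<partial>M) = ennreal (\<integral>\<omega>'. (a - X \<omega>')\<^sup>2 \<partial>M)"
      by (intro nn_integral_eq_integral) auto
    also have "(\<integral>\<omega>'. (a - X \<omega>')\<^sup>2 \<partial>M) = a\<^sup>2 - 2 * a * expectation X + expectation (\<lambda>\<omega>. (X \<omega>)\<^sup>2)"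
      by (simp add: power2_diff prob_space)
    also have "\<dots> = (a - expectation X)\<^sup>2 + variance X"
      unfolding var by (simp add: power2_diff)
    finally show ?thesis .
  qed
  have deviation_integrable: "integrable M (\<lambda>\<omega>. (X \<omega> - expectation X)\<^sup>2)"
    by (simp add: power2_diff)
  have "(\<integral>\<^sup>+\<omega>. \<integral>\<^sup>+\<omega>'. ennreal ((X \<omega> - X \<omega>')\<^sup>2) \<partial>M \<partial>M)
      = (\<integral>\<^sup>+\<omega>. ennreal ((X \<omega> - expectation X)\<^sup>2 + variance X) \<partial>M)"
    by (simp only: inner)
  also have "\<dots> = ennreal (\<integral>\<omega>. (X \<omega> - expectation X)\<^sup>2 + variance X \<partial>M)"
    using deviation_integrable by (intro nn_integral_eq_integral) auto
  also have "(\<integral>\<omega>. (X \<omega> - expectation X)\<^sup>2 + variance X \<partial>M) = 2 * variance X"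
    using deviation_integrable by (simp add: prob_space)
  finally show ?thesis .
qed

lemma enn2real_power2_le:
  fixes G :: ennreal
  assumes "2 * G\<^sup>2 \<le> ennreal (2 * v)" and "0 \<le> v"
  shows "(enn2real G)\<^sup>2 \<le> v"
proof -
  from assms(1) have "G \<noteq> \<infinity>"
    by (auto simp: ennreal_mult_eq_top_iff power_eq_top_ennreal top_unique)
  then obtain g where G: "G = ennreal g" "0 \<le> g"
    by (cases G) auto
  have "ennreal (2 * g\<^sup>2) = 2 * G\<^sup>2"
    using G by (simp add: ennreal_power ennreal_mult)
  also have "\<dots> \<le> ennreal (2 * v)"
    by (fact assms(1))
  finally show ?thesis
    using G assms(2) by (subst (asm) ennreal_le_iff) auto
qed

lemma (in prob_space) mean_abs_diff_sq_le_variance_of_hazard_antimono: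
  assumes "\<And>x. 0 \<le> f x" and distr: "distributed M lborel X (\<lambda>x. ennreal (f x))"
    and "integrable M (\<lambda>\<omega>. (X \<omega>)\<^sup>2)"
    and "ae_antimono_on (supp_region M X) (hazard_rate M X f)"
  shows "(\<integral>\<omega>. \<integral>\<omega>'. \<bar>X \<omega> - X \<omega>'\<bar> \<partial>M \<partial>M)\<^sup>2 \<le> variance X"
proof -
  have X[measurable]: "X \<in> M \<rightarrow>\<^sub>M lborel"
    using distr by (simp add: distributed_def)
  have X_integrable: "integrable M X"
    by (rule square_integrable_imp_integrable[OF _ assms(3)]) (use X in simp)
  interpret D: real_density_prob "distr M lborel X" f
    using assms(2,1) by (rule real_density_prob_distr)
  define G where "G = (\<integral>\<^sup>+\<omega>. \<integral>\<^sup>+\<omega>'. ennreal \<bar>X \<omega> - X \<omega>'\<bar> \<partial>M \<partial>M)"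
  have G_distr: "G = (\<integral>\<^sup>+x. \<integral>\<^sup>+t. ennreal \<bar>x - t\<bar> \<partial>distr M lborel X \<partial>distr M lborel X)"
    unfolding G_def by (rule nn_integral_pair_distr[OF X, of "\<lambda>x t. ennreal \<bar>x - t\<bar>"]) measurable
  have variance_distr: "ennreal (2 * variance X)
      = (\<integral>\<^sup>+x. \<integral>\<^sup>+t. ennreal ((x - t)\<^sup>2) \<partial>distr M lborel X \<partial>distr M lborel X)"
    using nn_integral_sq_diff_eq_variance[OF _ assms(3)] X
      nn_integral_pair_distr[OF X, of "\<lambda>x t. ennreal ((x - t)\<^sup>2)"]
    by simp
  have "supp_region (distr M lborel X) id = supp_region M X"
    "hazard_rate (distr M lborel X) id f = hazard_rate M X f"
    by (simp_all add: supp_region_def hazard_rate_def fun_eq_iff cdf_of_distr[OF X])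
  with assms(4) D.mean_abs_diff_sq_le_of_hazard_antimono
  have "2 * G\<^sup>2 \<le> ennreal (2 * variance X)"
    by (simp add: G_distr variance_distr)
  then have "(enn2real G)\<^sup>2 \<le> variance X"
    by (rule enn2real_power2_le) (rule integral_nonneg_AE, simp)
  moreover from X_integrable have "(\<integral>\<omega>. \<integral>\<omega>'. \<bar>X \<omega> - X \<omega>'\<bar> \<partial>M \<partial>M) = enn2real G"
    unfolding G_def by (rule integral_abs_diff_eq_nn_integral[rotated]) (use X in simp)
  ultimately show ?thesis
    by simp
qed

lemma ae_antimono_on_reflect:
  assumes "ae_mono_on A g"
  shows "ae_antimono_on (uminus -` A) (\<lambda>x. g (- x))"
proof -
  from assms obtain N where N: "N \<in> null_sets lborel"
    and mono: "\<forall>x\<in>A - N. \<forall>y\<in>A - N. x \<le> y \<longrightarrow> g x \<le> g y"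
    unfolding ae_mono_on_def by blast
  from N have "N \<in> null_sets (distr lborel borel uminus)"
    by (simp add: lborel_distr_uminus)
  then have "uminus -` N \<in> null_sets lborel"
    by (simp add: null_sets_distr_iff)
  with mono show ?thesis
    unfolding ae_antimono_on_def by (intro bexI[of _ "uminus -` N"]) auto
qed

lemma (in prob_space) supp_region_hazard_rate_uminus:
  assumes "distributed M lborel X (\<lambda>x. ennreal (f x))" and "\<And>x. 0 \<le> f x"
  shows "supp_region M (\<lambda>\<omega>. - X \<omega>) = uminus -` supp_region M X"
    and "hazard_rate M (\<lambda>\<omega>. - X \<omega>) (\<lambda>x. f (- x)) = (\<lambda>x. rev_hazard_rate M X f (- x))"
proof -
  interpret D: real_density_prob "distr M lborel X" f
    using assms by (rule real_density_prob_distr)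
  have X[measurable]: "X \<in> M \<rightarrow>\<^sub>M lborel"
    using assms(1) by (simp add: distributed_def)
  have cdf_uminus: "cdf_of M (\<lambda>\<omega>. - X \<omega>) x = 1 - cdf_of M X (- x)" for x
  proof -
    have "X -` {-x..} \<inter> space M = {\<omega> \<in> space M. - X \<omega> \<le> x}" by auto
    then have "cdf_of M (\<lambda>\<omega>. - X \<omega>) x = measure (distr M lborel X) {-x..}"
      by (simp add: cdf_of_def measure_distr[OF X])
    also have "\<dots> = measure (distr M lborel X) {-x<..}"
      by (rule D.measure_atLeast_eq_greaterThan)
    also have "\<dots> = 1 - measure (distr M lborel X) {..-x}"
      using D.prob_compl[of "{..-x}"] by (simp add: D.sets_eq Compl_eq_Diff_UNIV[symmetric])
    also have "\<dots> = 1 - cdf_of M X (- x)"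
      using cdf_of_distr[OF X, of "- x"] by (simp add: cdf_of_def atMost_def)
    finally show ?thesis .
  qed
  show "supp_region M (\<lambda>\<omega>. - X \<omega>) = uminus -` supp_region M X"
    by (auto simp: supp_region_def cdf_uminus)
  show "hazard_rate M (\<lambda>\<omega>. - X \<omega>) (\<lambda>x. f (- x)) = (\<lambda>x. rev_hazard_rate M X f (- x))"
    by (simp add: fun_eq_iff hazard_rate_def rev_hazard_rate_def cdf_uminus)
qed

theorem theorem1:
  fixes M :: "'a measure" and X :: "'a \<Rightarrow> real" and f :: "real \<Rightarrow> real"
  assumes "prob_space M"
    and "\<And>x. 0 \<le> f x"
    and "distributed M lborel X (\<lambda>x. ennreal (f x))"
    and "integrable M (\<lambda>\<omega>. (X \<omega>)\<^sup>2)"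
    and "ae_antimono_on (supp_region M X) (hazard_rate M X f)
         \<or> ae_mono_on (supp_region M X) (rev_hazard_rate M X f)"
  shows "sqrt (prob_space.variance M X) \<ge> (\<integral>\<omega>. (\<integral>\<omega>'. \<bar>X \<omega> - X \<omega>'\<bar> \<partial>M) \<partial>M)"
proof -
  interpret prob_space M by fact
  from assms(5) have "(\<integral>\<omega>. \<integral>\<omega>'. \<bar>X \<omega> - X \<omega>'\<bar> \<partial>M \<partial>M)\<^sup>2 \<le> variance X"
  proof
    assume "ae_antimono_on (supp_region M X) (hazard_rate M X f)"
    with assms(2-4) show ?thesis
      by (rule mean_abs_diff_sq_le_variance_of_hazard_antimono)
  next
    assume "ae_mono_on (supp_region M X) (rev_hazard_rate M X f)"
    then have "ae_antimono_on (supp_region M (\<lambda>\<omega>. - X \<omega>)) (hazard_rate M (\<lambda>\<omega>. - X \<omega>) (\<lambda>x. f (- x)))"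
      unfolding supp_region_hazard_rate_uminus[OF assms(3,2)] by (rule ae_antimono_on_reflect)
    moreover have "distributed M lborel (\<lambda>\<omega>. - X \<omega>) (\<lambda>x. ennreal (f (- x)))"
      using distributed_affine[OF assms(3), of "-1" 0] by (simp add: divide_ennreal_def)
    ultimately have "(\<integral>\<omega>. \<integral>\<omega>'. \<bar>- X \<omega> - - X \<omega>'\<bar> \<partial>M \<partial>M)\<^sup>2 \<le> variance (\<lambda>\<omega>. - X \<omega>)"
      using assms(2,4) by (intro mean_abs_diff_sq_le_variance_of_hazard_antimono) auto
    then show ?thesis
      by (simp add: abs_minus_commute power2_commute)
  qed
  then show ?thesis
    by (rule real_le_rsqrt)
qed

end
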